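(* Let $(X,\tau_1,\tau_2)$ be a bitopological space, $i,j\in\{1,2\}$, $i\neq j$, which is $(i,j)$-almost regular, $(i,j)_1$-almost paralindelöf and a $j$-$P$-space. Then every cover $\mathcal U$ of $X$ by $(i,j)$-regular open sets has a refinement which is a cover of $X$, is $j$-locally countable, and consists of $(j,i)$-regular closed sets (sets $F$ with $F=j\text{-}\mathrm{cl}(i\text{-}\mathrm{int}(F))$).
   Context: $(X,\tau_1,\tau_2)$ is a bitopological space and $i,j\in\{1,2\}$, $i\neq j$. For $k\in\{1,2\}$, $k\text{-}\mathrm{int}$ and $k\text{-}\mathrm{cl}$ denote interior and closure with respect to $\tau_k$; "$k$-open" means $\tau_k$-open. A set $A$ is $(i,j)$-regular open if $A=i\text{-}\mathrm{int}(j\text{-}\mathrm{cl}(A))$. $X$ is $(i,j)$-almost regular if for each $x\in X$ and each $(i,j)$-regular open set $U$ containing $x$ there is an $(i,j)$-regular open set $V$ with $x\in V\subseteq j\text{-}\mathrm{cl}(V)\subseteq U$. A family $\mathcal V$ refines $\mathcal U$ if each member of $\mathcal V$ is contained in some member of $\mathcal U$; a family is a cover of $X$ if its union is $X$. A family is $k$-locally countable if every $x\in X$ has a $k$-open neighbourhood meeting at most countably many of its members. $X$ is a $k$-$P$-space if every intersection of countably many $k$-open sets is $k$-open. $X$ is $(i,j)_1$-almost paralindelöf if for every cover $\mathcal U$ of $X$ by $i$-open sets there is a $j$-locally countable family $\mathcal V$ of $i$-open sets refining $\mathcal U$ such that $X=\bigcup\{j\text{-}\mathrm{cl}(V):V\in\mathcal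 V\}$. *)

theory Defs
  imports "HOL-Analysis.Analysis"
begin

definition bitop :: "'a topology \<Rightarrow> 'a topology \<Rightarrow> nat \<Rightarrow> 'a topology" where
  "bitop T1 T2 k = (if k = 1 then T1 else T2)"

definition regular_open_ij :: "'a topology \<Rightarrow> 'a topology \<Rightarrow> 'a set \<Rightarrow> bool" where
  "regular_open_ij Ti Tj A \<longleftrightarrow> A = Ti interior_of (Tj closure_of A)"

definition regular_closed_ij :: "'a topology \<Rightarrow> 'a topology \<Rightarrow> 'a set \<Rightarrow> bool" where
  "regular_closed_ij Ti Tj F \<longleftrightarrow> F = Ti closure_of (Tj interior_of F)"

definition almost_regular_ij :: "'a topology \<Rightarrow> 'a topology \<Rightarrow> bool" where
  "almost_regular_ij Ti Tj \<longleftrightarrow>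
     (\<forall>x \<in> topspace Ti. \<forall>U. regular_open_ij Ti Tj U \<and> x \<in> U \<longrightarrow>
        (\<exists>V. regular_open_ij Ti Tj V \<and> x \<in> V \<and> V \<subseteq> Tj closure_of V \<and> Tj closure_of V \<subseteq> U))"

definition refines :: "'a set set \<Rightarrow> 'a set set \<Rightarrow> bool" where
  "refines \<V> \<U> \<longleftrightarrow> (\<forall>V\<in>\<V>. \<exists>U\<in>\<U>. V \<subseteq> U)"

definition locally_countable :: "'a topology \<Rightarrow> 'a set set \<Rightarrow> bool" where
  "locally_countable T \<V> \<longleftrightarrow>
     (\<forall>x \<in> topspace T. \<exists>W. openin T W \<and> x \<in> W \<and> countable {V \<in> \<V>. V \<inter> W \<noteq> {}})"

definition P_space :: "'a topology \<Rightarrow> bool" where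
  "P_space T \<longleftrightarrow> (\<forall>\<G>. countable \<G> \<and> \<G> \<noteq> {} \<and> (\<forall>G\<in>\<G>. openin T G) \<longrightarrow> openin T (\<Inter>\<G>))"

definition almost_paralindelof_ij :: "'a topology \<Rightarrow> 'a topology \<Rightarrow> bool" where
  "almost_paralindelof_ij Ti Tj \<longleftrightarrow>
     (\<forall>\<U>. (\<forall>U\<in>\<U>. openin Ti U) \<and> \<Union>\<U> = topspace Ti \<longrightarrow>
        (\<exists>\<V>. (\<forall>V\<in>\<V>. openin Ti V) \<and> refines \<V> \<U> \<and> locally_countable Tj \<V> \<and>
             topspace Ti = \<Union>{Tj closure_of V | V. V \<in> \<V>}))"

end

theory Submission
  imports Defs
begin

text \<open>Almost regularity lets us shrink the given cover to the \<open>i\<close>-open sets whose \<open>j\<close>-closure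
  lies in a member of it; the almost paralindelof property refines this shrunk cover by a \<open>j\<close>-locally
  countable family \<open>\<V>\<close> of \<open>i\<close>-open sets whose \<open>j\<close>-closures cover \<open>X\<close>. These closures are the
  required refinement: the \<open>j\<close>-closure of an \<open>i\<close>-open set is \<open>(j,i)\<close>-regular closed, and an open
  set meets the closure of a set only if it meets the set itself, so taking closures preserves
  local countability.\<close>

lemma regular_closed_ij_closure_of_openin:
  assumes "topspace Ti = topspace Tj" and "openin Ti V"
  shows "regular_closed_ij Tj Ti (Tj closure_of V)"
proof -
  have "V \<subseteq> Tj closure_of V"
    using assms closure_of_subset openin_subset by metis
  then have "V \<subseteq> Ti interior_of (Tj closure_of V)"
    using assms(2) interior_of_maximal by blast
  then have "Tj closure_of V \<subseteq> Tj closure_of (Ti interior_of (Tj closure_of V))"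
    by (rule closure_of_mono)
  moreover have "Tj closure_of (Ti interior_of (Tj closure_of V)) \<subseteq> Tj closure_of V"
    by (metis closure_of_closure_of closure_of_mono interior_of_subset)
  ultimately show ?thesis
    unfolding regular_closed_ij_def by blast
qed

lemma locally_countable_closure_of_image:
  assumes "locally_countable T \<V>"
  shows "locally_countable T ((closure_of) T ` \<V>)"
  unfolding locally_countable_def
proof
  fix x assume "x \<in> topspace T"
  then obtain W where W: "openin T W" "x \<in> W" "countable {V \<in> \<V>. V \<inter> W \<noteq> {}}"
    using assms unfolding locally_countable_def by blast
  have "{F \<in> (closure_of) T ` \<V>. F \<inter> W \<noteq> {}} \<subseteq> (closure_of) T ` {V \<in> \<V>. V \<inter> W \<noteq> {}}"
    using openin_Int_closure_of_eq_empty[OF W(1)] by (auto simp: Int_commute)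
  then have "countable {F \<in> (closure_of) T ` \<V>. F \<inter> W \<noteq> {}}"
    using W(3) by (meson countable_image countable_subset)
  with W(1,2) show "\<exists>W. openin T W \<and> x \<in> W \<and> countable {F \<in> (closure_of) T ` \<V>. F \<inter> W \<noteq> {}}"
    by blast
qed

lemma almost_regular_ij_closure_shrinking_cover:
  assumes "almost_regular_ij Ti Tj"
    and "\<forall>U\<in>\<U>. regular_open_ij Ti Tj U" and "\<Union>\<U> = topspace Ti"
  shows "\<Union>{V. openin Ti V \<and> (\<exists>U\<in>\<U>. Tj closure_of V \<subseteq> U)} = topspace Ti"
proof
  show "\<Union>{V. openin Ti V \<and> (\<exists>U\<in>\<U>. Tj closure_of V \<subseteq> U)} \<subseteq> topspace Ti"
    using openin_subset by blast
  show "topspace Ti \<subseteq> \<Union>{V. openin Ti V \<and> (\<exists>U\<in>\<U>. Tj closure_of V \<subseteq> U)}"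
  proof
    fix x assume x: "x \<in> topspace Ti"
    then obtain U where U: "U \<in> \<U>" "x \<in> U"
      using assms(3) by blast
    then obtain V where V: "regular_open_ij Ti Tj V" "x \<in> V" "Tj closure_of V \<subseteq> U"
      using assms(1)[unfolded almost_regular_ij_def, rule_format, OF x, of U] assms(2) by blast
    have "openin Ti V"
      using V(1) unfolding regular_open_ij_def by (metis openin_interior_of)
    with U V show "x \<in> \<Union>{V. openin Ti V \<and> (\<exists>U\<in>\<U>. Tj closure_of V \<subseteq> U)}"
      by blast
  qed
qed

lemma refines_closure_of_image:
  assumes "refines \<V> {V. openin Ti V \<and> (\<exists>U\<in>\<U>. Tj closure_of V \<subseteq> U)}"
  shows "refines ((closure_of) Tj ` \<V>) \<U>"
  unfolding refines_def
proof
  fix F assume "F \<in> (closure_of) Tj ` \<V>"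
  then obtain V where V: "V \<in> \<V>" "F = Tj closure_of V"
    by blast
  then obtain W U where "U \<in> \<U>" "V \<subseteq> W" "Tj closure_of W \<subseteq> U"
    using assms unfolding refines_def by blast
  with V show "\<exists>U\<in>\<U>. F \<subseteq> U"
    using closure_of_mono by blast
qed

lemma almost_paralindelof_ij_regular_closed_refinement:
  assumes "topspace Ti = topspace Tj"
    and "almost_regular_ij Ti Tj" and "almost_paralindelof_ij Ti Tj"
    and "\<forall>U\<in>\<U>. regular_open_ij Ti Tj U" and "\<Union>\<U> = topspace Ti"
  shows "\<exists>\<F>. refines \<F> \<U> \<and> \<Union>\<F> = topspace Ti \<and> locally_countable Tj \<F> \<and>
             (\<forall>F\<in>\<F>. regular_closed_ij Tj Ti F)"
proof -
  define \<W> where "\<W> = {V. openin Ti V \<and> (\<exists>U\<in>\<U>. Tj closure_of V \<subseteq> U)}"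
  have "\<forall>W\<in>\<W>. openin Ti W" "\<Union>\<W> = topspace Ti"
    unfolding \<W>_def using almost_regular_ij_closure_shrinking_cover[OF assms(2,4,5)] by auto
  then obtain \<V> where \<V>: "\<forall>V\<in>\<V>. openin Ti V" "refines \<V> \<W>" "locally_countable Tj \<V>"
      "topspace Ti = \<Union>{Tj closure_of V | V. V \<in> \<V>}"
    using assms(3)[unfolded almost_paralindelof_ij_def, rule_format, of \<W>] by blast
  have "refines ((closure_of) Tj ` \<V>) \<U>"
    using refines_closure_of_image \<V>(2) unfolding \<W>_def .
  moreover have "\<Union>((closure_of) Tj ` \<V>) = topspace Ti"
    using \<V>(4) by blast
  moreover have "locally_countable Tj ((closure_of) Tj ` \<V>)"
    using locally_countable_closure_of_image \<V>(3) .
  moreover have "\<forall>F\<in>(closure_of) Tj ` \<V>. regular_closed_ij Tj Ti F"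
    using regular_closed_ij_closure_of_openin[OF assms(1)] \<V>(1) by blast
  ultimately show ?thesis
    by blast
qed

theorem mainTheorem13:
  fixes T1 T2 :: "'a topology" and i j :: nat
  assumes "topspace T1 = topspace T2"
    and "i \<in> {1,2}" and "j \<in> {1,2}" and "i \<noteq> j"
    and "almost_regular_ij (bitop T1 T2 i) (bitop T1 T2 j)"
    and "almost_paralindelof_ij (bitop T1 T2 i) (bitop T1 T2 j)"
    and "P_space (bitop T1 T2 j)"
    and "\<forall>U\<in>\<U>. regular_open_ij (bitop T1 T2 i) (bitop T1 T2 j) U"
    and "\<Union>\<U> = topspace T1"
  shows "\<exists>\<F>. refines \<F> \<U> \<and> \<Union>\<F> = topspace T1 \<and>
             locally_countable (bitop T1 T2 j) \<F> \<and>
             (\<forall>F\<in>\<F>. regular_closed_ij (bitop T1 T2 j) (bitop T1 T2 i) F)"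
proof -
  have topspace_bitop: "topspace (bitop T1 T2 k) = topspace T1" for k
    using assms(1) by (simp add: bitop_def)
  show ?thesis
    using almost_paralindelof_ij_regular_closed_refinement[of "bitop T1 T2 i" "bitop T1 T2 j" \<U>]
      assms(5,6,8,9) topspace_bitop by simp
qed

end
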